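(* Let $\mathcal{V},\mathcal{U}$ be finite additive groups and $\mathcal{X},\mathcal{Y}$ nonempty sets. Let $\{V^n\}_{n\ge1}$ be a general source ($V^n$ a random variable on $\mathcal{V}^n$ with distribution $P_{V^n}$) and $\{W^m\}_{m\ge1}$ a general channel ($W^m(\cdot|\mathbf{x})$ a probability mass function on $\mathcal{Y}^m$ for each $\mathbf{x}\in\mathcal{X}^m$). Let $R\ge0$, $\epsilon\ge0$. Suppose that for each $n$ we are given positive integers $m=m_n$, $l=l_n$, a random linear code $F_n:\mathcal{V}^n\to\mathcal{U}^{l}$, and a map $q_n:\mathcal{V}^n\times\mathcal{U}^{l}\to\mathcal{X}^{m}$, and a sequence $\gamma_n$ with $\gamma_n>0$, $\gamma_n\to0$, $n\gamma_n\to\infty$, such that $\limsup_{n\to\infty}n/m_n\le R$ and $$\limsup_{n\to\infty}\Pr\Big\{\frac1n\ln\frac{W^m(Y^m|X^m)}{P_{Y^m}(Y^m)}\le\frac1n\ln\frac{1}{P_{V^n}(V^n)}+\frac1n\ln\beta'(F_n,q_n)(V^n,X^m)+\gamma_n\Big\}\le\epsilon,$$ where $(V^n,X^m,Y^m)$ has joint distribution $P_{V^n}(\mathbf{v})P_{X^m|V^n}(\mathbf{x}|\mathbf{v})W^m(\mathbf{y}|\mathbf{x})$ with $P_{X^m|V^n}(\mathbf{x}|\mathbf{v})=|q_n^{-1}(\mathbf{v},\mathbf{x})|/|\mathcal{U}|^{l}$, $q_n^{-1}(\mathbf{v},\mathbf{x})=\{\mathbf{u}\in\mathcal{U}^l:q_n(\mathbf{v},\mathbf{u})=\mathbf{x}\}$,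 $P_{Y^m}$ is the marginal of $Y^m$, and $$\beta'(F_n,q_n)(\mathbf{v},\mathbf{x})=\max_{P\in\mathcal{P}_n(\mathcal{V})\setminus\{P_{0^n}\},\ \mathbf{u}_1\in\mathcal{U}^l}\ \sum_{\mathbf{u}_2\in q_n^{-1}(\mathbf{v},\mathbf{x})}\frac{\alpha(F_n)(P,P_{\mathbf{u}_2-\mathbf{u}_1})}{|q_n^{-1}(\mathbf{v},\mathbf{x})|}.$$ Let $\epsilon_n$ denote the error probability of the system using the random encoder $\Phi_n(\mathbf{v})=q_n(\mathbf{v},\Sigma_l(F_n(\Sigma_n(\mathbf{v})))+\bar U^l)$ with optimal decoders, averaged over the random encoder. Then $\limsup_{n\to\infty}\epsilon_n\le\epsilon$; i.e. the system is $(R,\epsilon)$-transmissible.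
   Context: In the encoder, $\Sigma_n,\Sigma_l$ are uniformly distributed random permutations of the coordinates of $\mathcal{V}^n$ and $\mathcal{U}^l$, $\bar U^l$ is uniform on $\mathcal{U}^l$, and $F_n,\Sigma_n,\Sigma_l,\bar U^l$, the source and the channel are mutually independent. For each realization $\varphi_n$ of $\Phi_n$ the decoder $\psi_n:\mathcal{Y}^m\to\mathcal{V}^n$ minimizes $\Pr\{V^n\ne\psi_n(Y)\}$, $Y$ being the channel output of $W^m$ with input $\varphi_n(V^n)$; $\epsilon_n$ is the expectation over $\Phi_n$ of this minimum error probability. A random linear code $F:\mathcal{V}^n\to\mathcal{U}^l$ is a random variable taking values in the group homomorphisms $\mathcal{V}^n\to\mathcal{U}^l$. The type $P_{\mathbf{x}}$ of a length-$n$ sequence over a finite alphabet $\mathcal{A}$ is $P_{\mathbf{x}}(a)=N(a|\mathbf{x})/n$ ($N(a|\mathbf{x})$ the number of occurrences of $a$); $\mathcal{P}_n(\mathcal{A})$ is the set of types of sequences in $\mathcal{A}^n$; $P_{0^n}$ is the type of the all-zero sequence. For a map $f:\mathcal{V}^n\to\mathcal{U}^l$, $S(f)(P,Q)=|\{\mathbf{v}: P_{\mathbf{v}}=P,\ P_{f(\mathbf{v})}=Q\}|/|\mathcal{V}|^n$; for a random linear code $F$, $P\in\mathcal{P}_n(\mathcal{V})$, $Q\in\mathcal{P}_l(\mathcal{U})$, $\alpha(F)(P,Q)=E[S(F)(P,Q)]\big/\big(\binom{n}{nP}\binom{l}{lQ}|\mathcal{V}|^{-n}|\mathcal{U}|^{-l}\big)$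 with multinomial coefficients $\binom{n}{nP}=n!/\prod_a(nP(a))!$, $\binom{l}{lQ}=l!/\prod_b(lQ(b))!$. Logarithms are natural. *)

theory Defs
  imports "HOL-Probability.Probability" "HOL-Combinatorics.Permutations"
begin

definition seqs :: "nat \<Rightarrow> 'a list set" where
  "seqs n = {xs. length xs = n}"

definition ladd :: "'a::plus list \<Rightarrow> 'a list \<Rightarrow> 'a list" where
  "ladd xs ys = map2 (+) xs ys"

definition lsub :: "'a::minus list \<Rightarrow> 'a list \<Rightarrow> 'a list" where
  "lsub xs ys = map2 (-) xs ys"

definition unif_seq :: "nat \<Rightarrow> ('a::finite) list pmf" where
  "unif_seq l = pmf_of_set (seqs l)"

definition unif_perm :: "nat \<Rightarrow> (nat \<Rightarrow> nat) pmf" where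
  "unif_perm n = pmf_of_set {\<sigma>. \<sigma> permutes {..<n}}"

text \<open>Group homomorphisms \<open>V^n \<rightarrow> U^l\<close> (values outside \<open>V^n\<close> are irrelevant).\<close>
definition is_linear_map :: "nat \<Rightarrow> nat \<Rightarrow> ('v::ab_group_add list \<Rightarrow> 'u::ab_group_add list) \<Rightarrow> bool" where
  "is_linear_map n l f \<longleftrightarrow>
     (\<forall>v\<in>seqs n. f v \<in> seqs l) \<and>
     (\<forall>a\<in>seqs n. \<forall>b\<in>seqs n. f (ladd a b) = ladd (f a) (f b))"

definition random_linear_code :: "nat \<Rightarrow> nat \<Rightarrow> ('v::ab_group_add list \<Rightarrow> 'u::ab_group_add list) pmf \<Rightarrow> bool" where
  "random_linear_code n l F \<longleftrightarrow> (\<forall>f\<in>set_pmf F. is_linear_map n l f)"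

definition type_of :: "'a list \<Rightarrow> 'a \<Rightarrow> real" where
  "type_of xs = (\<lambda>a. real (count_list xs a) / real (length xs))"

definition types :: "nat \<Rightarrow> ('a \<Rightarrow> real) set" where
  "types n = type_of ` seqs n"

definition multinom :: "nat \<Rightarrow> ('a::finite \<Rightarrow> real) \<Rightarrow> real" where
  "multinom n P = fact n / (\<Prod>a\<in>UNIV. fact (nat \<lfloor>real n * P a\<rfloor>))"

definition S_count :: "nat \<Rightarrow> ('v::finite list \<Rightarrow> 'u list) \<Rightarrow> ('v \<Rightarrow> real) \<Rightarrow> ('u \<Rightarrow> real) \<Rightarrow> real" where
  "S_count n f P Q =
     real (card {v\<in>seqs n. type_of v = P \<and> type_of (f v) = Q}) / real (CARD('v)) ^ n"

definition alpha :: "nat \<Rightarrow> nat \<Rightarrow> ('v::finite list \<Rightarrow> 'u::finite list) pmf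
                      \<Rightarrow> ('v \<Rightarrow> real) \<Rightarrow> ('u \<Rightarrow> real) \<Rightarrow> real" where
  "alpha n l F P Q =
     measure_pmf.expectation F (\<lambda>f. S_count n f P Q) /
     (multinom n P * multinom l Q * inverse (real (CARD('v)) ^ n) * inverse (real (CARD('u)) ^ l))"

definition q_inv :: "nat \<Rightarrow> ('v list \<Rightarrow> 'u list \<Rightarrow> 'x list) \<Rightarrow> 'v list \<Rightarrow> 'x list \<Rightarrow> 'u list set" where
  "q_inv l q v x = {u\<in>seqs l. q v u = x}"

definition beta' :: "nat \<Rightarrow> nat \<Rightarrow> ('v::{finite,ab_group_add} list \<Rightarrow> 'u::{finite,ab_group_add} list) pmf
                      \<Rightarrow> ('v list \<Rightarrow> 'u list \<Rightarrow> 'x list) \<Rightarrow> 'v list \<Rightarrow> 'x list \<Rightarrow> real" where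
  "beta' n l F q v x =
     Max ((\<lambda>(P, u1). \<Sum>u2\<in>q_inv l q v x.
              alpha n l F P (type_of (lsub u2 u1)) / real (card (q_inv l q v x)))
          ` ((types n - {type_of (replicate n 0)}) \<times> seqs l))"

text \<open>Joint distribution of \<open>(V^n, X^m, Y^m)\<close> with \<open>P_{X|V}(x|v) = |q^{-1}(v,x)|/|U|^l\<close>.\<close>
definition joint :: "'v list pmf \<Rightarrow> nat \<Rightarrow> ('v list \<Rightarrow> 'u::finite list \<Rightarrow> 'x list)
                      \<Rightarrow> ('x list \<Rightarrow> 'y list pmf) \<Rightarrow> ('v list \<times> 'x list \<times> 'y list) pmf" where
  "joint PV l q Wm =
     do { v \<leftarrow> PV; x \<leftarrow> map_pmf (q v) (unif_seq l); y \<leftarrow> Wm x; return_pmf (v, x, y) }"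

definition random_encoder :: "nat \<Rightarrow> nat \<Rightarrow> ('v list \<Rightarrow> 'u::{finite,ab_group_add} list) pmf
                      \<Rightarrow> ('v list \<Rightarrow> 'u list \<Rightarrow> 'x list) \<Rightarrow> ('v list \<Rightarrow> 'x list) pmf" where
  "random_encoder n l F q =
     do { f \<leftarrow> F; \<sigma>n \<leftarrow> unif_perm n; \<sigma>l \<leftarrow> unif_perm l; ub \<leftarrow> unif_seq l;
          return_pmf (\<lambda>v. q v (ladd (permute_list \<sigma>l (f (permute_list \<sigma>n v))) ub)) }"

definition opt_error :: "nat \<Rightarrow> 'v list pmf \<Rightarrow> ('x list \<Rightarrow> 'y list pmf) \<Rightarrow> ('v list \<Rightarrow> 'x list) \<Rightarrow> real" where
  "opt_error n PV Wm \<phi> =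
     (INF \<psi>\<in>{\<psi>. \<forall>y. \<psi> y \<in> seqs n}.
        measure_pmf.prob (do { v \<leftarrow> PV; y \<leftarrow> Wm (\<phi> v); return_pmf (v, y) })
                         {(v, y). v \<noteq> \<psi> y})"

definition avg_error :: "nat \<Rightarrow> nat \<Rightarrow> 'v list pmf \<Rightarrow> ('x list \<Rightarrow> 'y list pmf)
                      \<Rightarrow> ('v list \<Rightarrow> 'u::{finite,ab_group_add} list) pmf \<Rightarrow> ('v list \<Rightarrow> 'u list \<Rightarrow> 'x list) \<Rightarrow> real" where
  "avg_error n l PV Wm F q =
     measure_pmf.expectation (random_encoder n l F q) (opt_error n PV Wm)"

end

(*
  Decode to a source sequence whose codeword passes the information-density test, i.e. lies
  outside the event of the hypothesis. The error is at most the probability that the transmitted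
  triple fails the test plus the expected number of other source sequences passing it. The dither
  makes each codeword uniform, so the first term is the probability in the hypothesis. For two
  distinct source sequences v, v', linearity and the two random permutations make the pair of
  codewords distributed as alpha(F) at the types of the differences; averaging alpha over the
  fibres of q gives at most beta', and the test turns beta' into the factor exp(-n gamma_n) on the
  second term. Since n gamma_n tends to infinity, the limsup of the error is at most epsilon.
*)
theory Submission
  imports Defs "HOL-Combinatorics.Multiset_Permutations"
begin

lemma pmf_eq_pmf_of_set_if_const:
  assumes "finite C" "set_pmf D \<subseteq> C" "a \<in> C" "\<And>y. y \<in> C \<Longrightarrow> pmf D y = pmf D a"
  shows "D = pmf_of_set C"
proof -
  have "1 = (\<Sum>y\<in>C. pmf D y)"
    using assms(1,2) by (metis sum_pmf_eq_1)
  also have "\<dots> = real (card C) * pmf D a"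
    using assms(4) by simp
  moreover have "card C > 0"
    using assms(1,3) card_gt_0_iff by blast
  ultimately have a: "pmf D a = 1 / real (card C)"
    by (simp add: field_simps)
  show ?thesis
  proof (rule pmf_eqI)
    fix y
    show "pmf D y = pmf (pmf_of_set C) y"
    proof (cases "y \<in> C")
      case True
      then have "C \<noteq> {}" by blast
      then show ?thesis using True a assms(1,4) by auto
    next
      case False
      then have "y \<notin> set_pmf D" and "C \<noteq> {}"
        using assms(2,3) by auto
      then show ?thesis using False assms(1) by (simp add: set_pmf_iff)
    qed
  qed
qed

lemma integrable_measure_pmf_bounded:
  fixes g :: "'a \<Rightarrow> real"
  assumes "\<And>x. \<bar>g x\<bar> \<le> B"
  shows "integrable (measure_pmf p) g"
  using assms by (intro measure_pmf.integrable_const_bound[where B=B]) auto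

lemma abs_expectation_le:
  fixes g :: "'a \<Rightarrow> real"
  assumes "\<And>x. \<bar>g x\<bar> \<le> B"
  shows "\<bar>measure_pmf.expectation p g\<bar> \<le> B"
proof -
  have "norm (measure_pmf.expectation p g) \<le> measure_pmf.expectation p (\<lambda>x. norm (g x))"
    by (rule integral_norm_bound)
  also have "\<dots> \<le> B"
    using assms integrable_measure_pmf_bounded[of "\<lambda>x. norm (g x)" B p]
    by (intro measure_pmf.integral_le_const) auto
  finally show ?thesis by simp
qed

lemma expectation_cong_set_pmf:
  fixes f g :: "'a \<Rightarrow> real"
  assumes "\<And>x. x \<in> set_pmf p \<Longrightarrow> f x = g x"
  shows "measure_pmf.expectation p f = measure_pmf.expectation p g"
  using assms by (intro integral_cong_AE) (auto intro: AE_pmfI)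

lemma expectation_mono_bounded:
  fixes f g :: "'a \<Rightarrow> real"
  assumes "\<And>x. \<bar>f x\<bar> \<le> B" "\<And>x. \<bar>g x\<bar> \<le> B" "\<And>x. x \<in> set_pmf p \<Longrightarrow> f x \<le> g x"
  shows "measure_pmf.expectation p f \<le> measure_pmf.expectation p g"
  using assms by (intro integral_mono_AE integrable_measure_pmf_bounded) (auto intro: AE_pmfI)

lemma expectation_bind_pmf:
  fixes f :: "'b \<Rightarrow> real"
  assumes "\<And>x. \<bar>f x\<bar> \<le> B"
  shows "measure_pmf.expectation (bind_pmf M N) f
           = measure_pmf.expectation M (\<lambda>x. measure_pmf.expectation (N x) f)"
  unfolding measure_pmf_bind
  using measurable_measure_pmf[of N] assms
  by (intro integral_bind[where K="count_space UNIV" and B=B and B'=1])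
     (auto simp: measure_pmf.emeasure_space_1 intro: measure_pmf.finite_measure)

lemma expectation_bind_pmf_pair:
  fixes f :: "'a \<times> 'b \<Rightarrow> real"
  assumes "\<And>z. \<bar>f z\<bar> \<le> B"
  shows "measure_pmf.expectation (do { x \<leftarrow> M; y \<leftarrow> N x; return_pmf (x, y) }) f
           = measure_pmf.expectation M (\<lambda>x. measure_pmf.expectation (N x) (\<lambda>y. f (x, y)))"
  using assms by (simp add: expectation_bind_pmf[where B=B] map_pmf_def[symmetric])

lemma prob_bind_pmf_pair:
  "measure_pmf.prob (do { x \<leftarrow> M; y \<leftarrow> N x; return_pmf (x, y) }) S
     = measure_pmf.expectation M (\<lambda>x. measure_pmf.expectation (N x) (\<lambda>y. indicator S (x, y)))"
  by (subst expectation_bind_pmf_pair[where B=1, symmetric]) auto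

lemma expectation_add_bounded:
  fixes f g :: "'a \<Rightarrow> real"
  assumes "\<And>x. \<bar>f x\<bar> \<le> A" "\<And>x. \<bar>g x\<bar> \<le> B"
  shows "measure_pmf.expectation p (\<lambda>x. f x + g x) = measure_pmf.expectation p f + measure_pmf.expectation p g"
  using assms by (intro Bochner_Integration.integral_add integrable_measure_pmf_bounded)

lemma expectation_finite_support:
  fixes f :: "'a \<Rightarrow> real"
  assumes "finite S" "set_pmf p \<subseteq> S"
  shows "measure_pmf.expectation p f = (\<Sum>x\<in>S. pmf p x * f x)"
  using assms by (subst integral_measure_pmf_real[OF assms(1)]) (auto simp: mult.commute)

lemma expectation_swap_finite_support:
  fixes k :: "'a \<Rightarrow> 'b \<Rightarrow> real"
  assumes "finite S" "set_pmf P \<subseteq> S" "\<And>x t. \<bar>k x t\<bar> \<le> B"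
  shows "measure_pmf.expectation T (\<lambda>t. measure_pmf.expectation P (\<lambda>x. k x t))
           = measure_pmf.expectation P (\<lambda>x. measure_pmf.expectation T (k x))"
proof -
  have "measure_pmf.expectation T (\<lambda>t. \<Sum>x\<in>S. pmf P x * k x t)
          = (\<Sum>x\<in>S. measure_pmf.expectation T (\<lambda>t. pmf P x * k x t))"
    using assms(3) by (intro Bochner_Integration.integral_sum integrable_mult_right integrable_measure_pmf_bounded)
  then show ?thesis
    unfolding expectation_finite_support[OF assms(1,2)] by simp
qed

lemma scaled_prob_mono:
  fixes M N :: "'a pmf"
  assumes c: "c \<ge> 0" and d: "d \<ge> 0" and le: "\<And>y. y \<in> G \<Longrightarrow> c * pmf M y \<le> d * pmf N y"
  shows "c * measure_pmf.prob M G \<le> d * measure_pmf.prob N G"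
proof -
  have em: "emeasure (measure_pmf P) G
              = (\<integral>\<^sup>+x. ennreal (pmf P x) * indicator G x \<partial>count_space UNIV)" for P :: "'a pmf"
    by (subst nn_integral_indicator[symmetric]) (simp_all add: nn_integral_measure_pmf)
  have "ennreal (c * measure_pmf.prob M G) = ennreal c * emeasure (measure_pmf M) G"
    using c by (simp add: ennreal_mult measure_pmf.emeasure_eq_measure)
  also have "\<dots> = (\<integral>\<^sup>+x. ennreal c * (ennreal (pmf M x) * indicator G x) \<partial>count_space UNIV)"
    unfolding em by (rule nn_integral_cmult[symmetric]) simp
  also have "\<dots> \<le> (\<integral>\<^sup>+x. ennreal d * (ennreal (pmf N x) * indicator G x) \<partial>count_space UNIV)"
  proof (rule nn_integral_mono)
    fix x
    show "ennreal c * (ennreal (pmf M x) * indicator G x)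
            \<le> ennreal d * (ennreal (pmf N x) * indicator G x)"
      using le[of x] c d by (cases "x \<in> G") (auto simp flip: ennreal_mult intro: ennreal_leI)
  qed
  also have "\<dots> = ennreal d * emeasure (measure_pmf N) G"
    unfolding em by (rule nn_integral_cmult) simp
  also have "\<dots> = ennreal (d * measure_pmf.prob N G)"
    using d by (simp add: ennreal_mult measure_pmf.emeasure_eq_measure)
  finally show ?thesis using d by (simp add: ennreal_le_iff)
qed

section \<open>Sequences over finite groups and their types\<close>

lemma finite_seqs [simp]: "finite (seqs n :: 'a::finite list set)"
  unfolding seqs_def using finite_lists_length_eq[of "UNIV :: 'a set" n] by simp

lemma card_seqs: "card (seqs n :: 'a::finite list set) = CARD('a) ^ n"
  unfolding seqs_def using card_lists_length_eq[of "UNIV :: 'a set" n] by simp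

lemma seqs_not_empty [simp]: "seqs n \<noteq> {}"
  unfolding seqs_def by (auto intro: exI[of _ "replicate n undefined"])

lemma set_pmf_unif_seq [simp]: "set_pmf (unif_seq l :: 'a::finite list pmf) = seqs l"
  unfolding unif_seq_def by simp

lemma length_ladd [simp]: "length (ladd a b) = min (length a) (length b)"
  by (simp add: ladd_def)

lemma length_lsub [simp]: "length (lsub a b) = min (length a) (length b)"
  by (simp add: lsub_def)

lemma nth_ladd: "i < length a \<Longrightarrow> i < length b \<Longrightarrow> ladd a b ! i = a ! i + b ! i"
  by (simp add: ladd_def)

lemma nth_lsub: "i < length a \<Longrightarrow> i < length b \<Longrightarrow> lsub a b ! i = a ! i - b ! i"
  by (simp add: lsub_def)

lemma ladd_lsub_cancel:
  fixes a b :: "'a::ab_group_add list"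
  shows "length a = length b \<Longrightarrow> ladd a (lsub b a) = b"
  by (rule nth_equalityI) (auto simp: nth_ladd nth_lsub)

lemma lsub_ladd_cancel:
  fixes a c :: "'a::ab_group_add list"
  shows "length a = length c \<Longrightarrow> lsub (ladd a c) a = c"
  by (rule nth_equalityI) (auto simp: nth_ladd nth_lsub)

lemma ladd_eq_iff:
  fixes a c u :: "'a::ab_group_add list"
  assumes "length a = length c" "length u = length c"
  shows "ladd a c = u \<longleftrightarrow> c = lsub u a"
  using assms lsub_ladd_cancel[of a c] ladd_lsub_cancel[of a u] by auto

lemma ladd_lsub_eq_iff:
  fixes a b u1 u2 :: "'a::ab_group_add list"
  assumes "length a = l" "length b = l" "length u1 = l" "length u2 = l"
  shows "ladd b (lsub u1 a) = u2 \<longleftrightarrow> lsub b a = lsub u2 u1"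
proof -
  have "b ! i + (u1 ! i - a ! i) = u2 ! i \<longleftrightarrow> b ! i - a ! i = u2 ! i - u1 ! i" for i
    by (auto simp: algebra_simps)
  then show ?thesis
    using assms by (simp add: list_eq_iff_nth_eq nth_ladd nth_lsub)
qed

lemma lsub_eq_replicate_0_iff:
  fixes a b :: "'a::ab_group_add list"
  assumes "length a = length b"
  shows "lsub a b = replicate (length a) 0 \<longleftrightarrow> a = b"
  using assms by (auto simp: list_eq_iff_nth_eq nth_lsub)

lemma permute_list_lsub:
  fixes a b :: "'a::ab_group_add list"
  assumes "\<sigma> permutes {..<length a}" "length a = length b"
  shows "permute_list \<sigma> (lsub a b) = lsub (permute_list \<sigma> a) (permute_list \<sigma> b)"
  using assms permutes_in_image[OF assms(1)]
  by (intro nth_equalityI) (auto simp: nth_lsub permute_list_nth)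

lemma is_linear_map_lsub:
  fixes f :: "'v::ab_group_add list \<Rightarrow> 'u::ab_group_add list"
  assumes "is_linear_map n l f" "v \<in> seqs n" "v' \<in> seqs n"
  shows "f (lsub v' v) = lsub (f v') (f v)"
proof -
  have d: "lsub v' v \<in> seqs n"
    using assms(2,3) by (simp add: seqs_def)
  have "f v' = f (ladd v (lsub v' v))"
    using assms(2,3) by (simp add: seqs_def ladd_lsub_cancel)
  also have "\<dots> = ladd (f v) (f (lsub v' v))"
    using assms d unfolding is_linear_map_def by blast
  finally show ?thesis
    using assms d unfolding is_linear_map_def seqs_def by (simp add: lsub_ladd_cancel)
qed

lemma random_linear_code_in_seqs:
  "random_linear_code n l F \<Longrightarrow> f \<in> set_pmf F \<Longrightarrow> v \<in> seqs n \<Longrightarrow> f v \<in> seqs l"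
  unfolding random_linear_code_def is_linear_map_def by blast

lemma map_pmf_ladd_unif_seq:
  fixes a :: "'a::{finite,ab_group_add} list"
  shows "map_pmf (ladd a) (unif_seq (length a)) = unif_seq (length a)"
proof -
  have "bij_betw (ladd a) (seqs (length a)) (seqs (length a))"
    by (rule bij_betw_byWitness[where f'="\<lambda>u. lsub u a"])
       (auto simp: seqs_def lsub_ladd_cancel ladd_lsub_cancel)
  then show ?thesis
    unfolding unif_seq_def by (simp add: map_pmf_of_set_bij_betw)
qed

lemma type_of_eq_iff_mset_eq:
  assumes "length a = length b"
  shows "type_of a = type_of b \<longleftrightarrow> mset a = mset b"
proof (cases "length a = 0")
  case True
  then show ?thesis using assms by simp
next
  case False
  then have "type_of a = type_of b \<longleftrightarrow> (\<forall>x. count_list a x = count_list b x)"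
    using assms by (simp add: type_of_def fun_eq_iff)
  then show ?thesis
    by (simp add: multiset_eq_iff count_mset)
qed

lemma type_of_eq_replicate_0_iff:
  fixes a :: "'a::zero list"
  assumes "length a = n"
  shows "type_of a = type_of (replicate n 0) \<longleftrightarrow> a = replicate n 0"
proof
  assume "type_of a = type_of (replicate n 0)"
  then have "mset a = mset (replicate n 0)"
    using assms type_of_eq_iff_mset_eq[of a "replicate n 0"] by simp
  then have "set a = set (replicate n (0::'a))"
    by (rule mset_eq_setD)
  then have "set a \<subseteq> {0}"
    by (simp add: set_replicate_conv_if)
  then show "a = replicate n 0"
    using assms by (intro replicate_eqI) auto
qed simp

lemma multinom_type_of:
  fixes w :: "'a::finite list"
  assumes "length w = n"
  shows "multinom n (type_of w) = real (card {ys. mset ys = mset w})"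
proof (cases "n = 0")
  case True
  then show ?thesis using assms by (simp add: multinom_def)
next
  case False
  have perms: "{ys. mset ys = mset w} = permutations_of_multiset (mset w)"
    by (simp add: permutations_of_multiset_def)
  have counts: "nat \<lfloor>real n * type_of w a\<rfloor> = count_list w a" for a
    using assms False unfolding type_of_def by simp
  have "(\<Prod>a\<in>UNIV. fact (count_list w a) :: real) = (\<Prod>a\<in>set w. fact (count_list w a))"
    by (rule prod.mono_neutral_right) (auto simp: count_list_0_iff)
  then have "multinom n (type_of w) = fact n / (\<Prod>a\<in>set w. fact (count_list w a))"
    unfolding multinom_def counts by simp
  also have "\<dots> = real (card {ys. mset ys = mset w})"
    using card_permutations_of_multiset[of "mset w"] assms
    unfolding perms by (simp add: real_of_nat_div of_nat_prod count_mset)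
  finally show ?thesis .
qed

lemma finite_mset_eq: "finite {ys. mset ys = mset xs}"
  using finite_permutations_of_multiset[of "mset xs"] unfolding permutations_of_multiset_def .

lemma multinom_type_of_pos:
  fixes w :: "'a::finite list"
  assumes "length w = n"
  shows "multinom n (type_of w) > 0"
  using multinom_type_of[OF assms] finite_mset_eq[of w] card_gt_0_iff[of "{ys. mset ys = mset w}"]
  by auto

section \<open>Uniform rearrangements\<close>

lemma set_pmf_unif_perm [simp]: "set_pmf (unif_perm n) = {\<sigma>. \<sigma> permutes {..<n}}"
  unfolding unif_perm_def by (subst set_pmf_of_set) (auto intro: finite_permutations permutes_id)

lemma permute_list_inv_cancel:
  assumes "\<tau> permutes {..<length xs}"
  shows "permute_list (inv \<tau>) (permute_list \<tau> xs) = xs"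
  using permute_list_compose[OF permutes_inv[OF assms], of \<tau>] permutes_inv_o(1)[OF assms] by simp

lemma map_pmf_comp_unif_perm:
  assumes "\<tau> permutes {..<n}"
  shows "map_pmf (\<lambda>\<sigma>. \<sigma> \<circ> \<tau>) (unif_perm n) = unif_perm n"
proof -
  have "bij_betw (\<lambda>\<sigma>. \<sigma> \<circ> \<tau>) {\<sigma>. \<sigma> permutes {..<n}} {\<sigma>. \<sigma> permutes {..<n}}"
    by (rule bij_betw_byWitness[where f'="\<lambda>\<sigma>. \<sigma> \<circ> inv \<tau>"])
       (use assms permutes_inv[OF assms] in \<open>auto simp: comp_assoc permutes_inv_o intro: permutes_compose\<close>)
  then show ?thesis
    unfolding unif_perm_def by (intro map_pmf_of_set_bij_betw) (auto intro: finite_permutations permutes_id)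
qed

text \<open>A uniformly random rearrangement of \<open>xs\<close> is uniform on the rearrangements of \<open>xs\<close>: its
  distribution is invariant under each further rearrangement \<open>permute_list \<tau>\<close>, which is
  injective on lists of length \<open>length xs\<close>.\<close>

lemma map_pmf_permute_list_unif_perm:
  "map_pmf (\<lambda>\<sigma>. permute_list \<sigma> xs) (unif_perm (length xs)) = pmf_of_set {ys. mset ys = mset xs}"
proof -
  define D where "D = map_pmf (\<lambda>\<sigma>. permute_list \<sigma> xs) (unif_perm (length xs))"
  have supp: "set_pmf D \<subseteq> {ys. mset ys = mset xs}" and xs_in: "xs \<in> set_pmf D"
    unfolding D_def using permutes_id[of "{..<length xs}"] by (auto intro!: image_eqI[of _ _ id])
  have const: "pmf D y = pmf D xs" if y: "mset y = mset xs" for y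
  proof -
    obtain \<tau> where \<tau>: "\<tau> permutes {..<length xs}" "permute_list \<tau> xs = y"
      using mset_eq_permutation[OF y] by blast
    have "map_pmf (permute_list \<tau>) D = map_pmf (\<lambda>\<sigma>. permute_list (\<sigma> \<circ> \<tau>) xs) (unif_perm (length xs))"
      unfolding D_def pmf.map_comp using \<tau>(1) by (intro map_pmf_cong) (simp_all add: permute_list_compose)
    also have "\<dots> = map_pmf (\<lambda>\<sigma>. permute_list \<sigma> xs) (map_pmf (\<lambda>\<sigma>. \<sigma> \<circ> \<tau>) (unif_perm (length xs)))"
      by (simp add: pmf.map_comp o_def)
    finally have invariant: "map_pmf (permute_list \<tau>) D = D"
      unfolding map_pmf_comp_unif_perm[OF \<tau>(1)] D_def .
    have "inj_on (permute_list \<tau>) (set_pmf D)"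
    proof (rule inj_onI)
      fix a b
      assume "a \<in> set_pmf D" "b \<in> set_pmf D" and eq: "permute_list \<tau> a = permute_list \<tau> b"
      then have "length a = length xs" "length b = length xs"
        using supp by (auto dest: mset_eq_length)
      then show "a = b"
        using permute_list_inv_cancel[of \<tau> a] permute_list_inv_cancel[of \<tau> b] \<tau>(1) eq by metis
    qed
    then have "pmf (map_pmf (permute_list \<tau>) D) (permute_list \<tau> xs) = pmf D xs"
      using xs_in by (rule pmf_map_inj)
    then show ?thesis
      unfolding invariant \<tau>(2) .
  qed
  have "xs \<in> {ys. mset ys = mset xs}"
    by simp
  then show ?thesis
    unfolding D_def[symmetric] using const by (intro pmf_eq_pmf_of_set_if_const[OF finite_mset_eq supp]) blast+
qed

lemma prob_permute_list_eq:
  assumes "length y = length d"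
  shows "measure_pmf.prob (unif_perm (length y)) {\<sigma>. permute_list \<sigma> y = d}
           = of_bool (mset y = mset d) / real (card {ys. mset ys = mset d})"
proof -
  have "measure_pmf.prob (unif_perm (length y)) {\<sigma>. permute_list \<sigma> y = d}
          = pmf (map_pmf (\<lambda>\<sigma>. permute_list \<sigma> y) (unif_perm (length y))) d"
    by (simp add: pmf_map vimage_def)
  also have "\<dots> = pmf (pmf_of_set {ys. mset ys = mset y}) d"
    unfolding map_pmf_permute_list_unif_perm ..
  also have "\<dots> = of_bool (mset y = mset d) / real (card {ys. mset ys = mset d})"
  proof -
    have "{ys. mset ys = mset y} \<noteq> {}"
      by auto
    then show ?thesis
      using finite_mset_eq[of y] by (cases "mset y = mset d") (auto simp: indicator_def)
  qed
  finally show ?thesis .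
qed

lemma mset_eq_and_image_mset_eq_iff:
  assumes f: "\<forall>v\<in>seqs n. f v \<in> seqs l" and w: "w \<in> seqs n" and d: "d \<in> seqs l"
  shows "mset z = mset w \<and> mset (f z) = mset d
           \<longleftrightarrow> z \<in> seqs n \<and> type_of z = type_of w \<and> type_of (f z) = type_of d"
proof (cases "length z = n")
  case True
  then have "length (f z) = length d"
    using f d by (simp add: seqs_def)
  then show ?thesis
    using True w by (simp add: seqs_def type_of_eq_iff_mset_eq)
next
  case False
  then show ?thesis
    using w by (auto simp: seqs_def dest: mset_eq_length)
qed

lemma expectation_prob_permuted_image_eq:
  fixes f :: "'v::finite list \<Rightarrow> 'u::finite list"
  assumes f: "\<forall>v\<in>seqs n. f v \<in> seqs l" and w: "w \<in> seqs n" and d: "d \<in> seqs l"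
  shows "measure_pmf.expectation (unif_perm n) (\<lambda>\<sigma>n.
           measure_pmf.prob (unif_perm l) {\<sigma>l. permute_list \<sigma>l (f (permute_list \<sigma>n w)) = d})
       = real (card {w'\<in>seqs n. type_of w' = type_of w \<and> type_of (f w') = type_of d})
           / (multinom n (type_of w) * multinom l (type_of d))"
proof -
  define Cw where "Cw = {ys. mset ys = mset w}"
  have fw: "f z \<in> seqs l" if "mset z = mset w" for z
    using f w that mset_eq_length[OF that] by (simp add: seqs_def)
  have "measure_pmf.prob (unif_perm l) {\<sigma>l. permute_list \<sigma>l (f z) = d}
          = of_bool (mset (f z) = mset d) / multinom l (type_of d)" if "mset z = mset w" for z
    using prob_permute_list_eq[of "f z" d] fw[OF that] d multinom_type_of[of d l]
    by (simp add: seqs_def)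
  then have "measure_pmf.expectation (unif_perm n) (\<lambda>\<sigma>n.
           measure_pmf.prob (unif_perm l) {\<sigma>l. permute_list \<sigma>l (f (permute_list \<sigma>n w)) = d})
       = measure_pmf.expectation (unif_perm n) (\<lambda>\<sigma>n.
           of_bool (mset (f (permute_list \<sigma>n w)) = mset d) / multinom l (type_of d))"
    using w by (intro expectation_cong_set_pmf) (auto simp: seqs_def)
  also have "\<dots> = measure_pmf.expectation (map_pmf (\<lambda>\<sigma>. permute_list \<sigma> w) (unif_perm (length w)))
           (\<lambda>z. of_bool (mset (f z) = mset d)) / multinom l (type_of d)"
    using w by (simp add: seqs_def)
  also have "\<dots> = real (card (Cw \<inter> {z. mset (f z) = mset d})) / real (card Cw) / multinom l (type_of d)"
    unfolding map_pmf_permute_list_unif_perm Cw_def[symmetric]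
    using finite_mset_eq[of w] by (subst integral_pmf_of_set) (auto simp: Cw_def)
  also have "Cw \<inter> {z. mset (f z) = mset d}
               = {w'\<in>seqs n. type_of w' = type_of w \<and> type_of (f w') = type_of d}"
    unfolding Cw_def using mset_eq_and_image_mset_eq_iff[OF f w d] by blast
  finally show ?thesis
    using w multinom_type_of[of w n] by (simp add: Cw_def seqs_def)
qed

section \<open>The random encoder\<close>

text \<open>The random encoder is the image of the seed \<open>(f, \<sigma>n, \<sigma>l, ub)\<close> under a deterministic map,
  and all averages over the encoder are taken over the seed.\<close>

definition encoder_seed :: "nat \<Rightarrow> nat \<Rightarrow> ('v list \<Rightarrow> 'u::finite list) pmf
    \<Rightarrow> (('v list \<Rightarrow> 'u list) \<times> (nat \<Rightarrow> nat) \<times> (nat \<Rightarrow> nat) \<times> 'u list) pmf" where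
  "encoder_seed n l F =
     do { f \<leftarrow> F; \<sigma>n \<leftarrow> unif_perm n; \<sigma>l \<leftarrow> unif_perm l; ub \<leftarrow> unif_seq l; return_pmf (f, \<sigma>n, \<sigma>l, ub) }"

definition codeword :: "('v list \<Rightarrow> 'u::plus list) \<times> (nat \<Rightarrow> nat) \<times> (nat \<Rightarrow> nat) \<times> 'u list
    \<Rightarrow> 'v list \<Rightarrow> 'u list" where
  "codeword t v = (case t of (f, \<sigma>n, \<sigma>l, ub) \<Rightarrow> ladd (permute_list \<sigma>l (f (permute_list \<sigma>n v))) ub)"

lemma random_encoder_eq_map_encoder_seed:
  "random_encoder n l F q = map_pmf (\<lambda>t v. q v (codeword t v)) (encoder_seed n l F)"
  by (simp add: random_encoder_def encoder_seed_def map_bind_pmf codeword_def)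

lemma map_pmf_encoder_seed:
  "map_pmf g (encoder_seed n l F) =
     do { f \<leftarrow> F; \<sigma>n \<leftarrow> unif_perm n; \<sigma>l \<leftarrow> unif_perm l; map_pmf (\<lambda>ub. g (f, \<sigma>n, \<sigma>l, ub)) (unif_seq l) }"
  by (simp add: encoder_seed_def map_bind_pmf map_pmf_def[symmetric] pmf.map_comp o_def)

lemma map_pmf_codeword_eq_unif_seq:
  assumes F: "random_linear_code n l F" and v: "v \<in> seqs n"
  shows "map_pmf (\<lambda>t. codeword t v) (encoder_seed n l F) = unif_seq l"
proof -
  have "map_pmf (ladd (permute_list \<sigma>l (f (permute_list \<sigma>n v)))) (unif_seq l) = unif_seq l"
    if "f \<in> set_pmf F" for f \<sigma>n \<sigma>l
  proof -
    have "f (permute_list \<sigma>n v) \<in> seqs l"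
      using v random_linear_code_in_seqs[OF F that] by (simp add: seqs_def)
    then show ?thesis
      using map_pmf_ladd_unif_seq[of "permute_list \<sigma>l (f (permute_list \<sigma>n v))"] by (simp add: seqs_def)
  qed
  then show ?thesis
    unfolding map_pmf_encoder_seed codeword_def by (simp cong: bind_pmf_cong)
qed

lemma expectation_codeword:
  fixes h :: "'u::{finite,ab_group_add} list \<Rightarrow> real"
  assumes "random_linear_code n l F" "v \<in> seqs n"
  shows "measure_pmf.expectation (encoder_seed n l F) (\<lambda>t. h (codeword t v))
           = measure_pmf.expectation (unif_seq l) h"
proof -
  have "measure_pmf.expectation (map_pmf (\<lambda>t. codeword t v) (encoder_seed n l F)) h
          = measure_pmf.expectation (unif_seq l) h"
    unfolding map_pmf_codeword_eq_unif_seq[OF assms] ..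
  then show ?thesis
    by simp
qed

lemma pmf_map_ladd_pair:
  fixes a b u1 u2 :: "'a::{finite,ab_group_add} list"
  assumes "a \<in> seqs l" "b \<in> seqs l" "u1 \<in> seqs l" "u2 \<in> seqs l"
  shows "pmf (map_pmf (\<lambda>ub. (ladd a ub, ladd b ub)) (unif_seq l)) (u1, u2)
           = of_bool (lsub b a = lsub u2 u1) / real CARD('a) ^ l"
proof -
  have "ladd a ub = u1 \<and> ladd b ub = u2 \<longleftrightarrow> ub = lsub u1 a \<and> lsub b a = lsub u2 u1"
    if "ub \<in> seqs l" for ub
    using that assms ladd_eq_iff[of a ub u1] ladd_lsub_eq_iff[of a l b u1 u2] by (auto simp: seqs_def)
  moreover have "lsub u1 a \<in> seqs l"
    using assms by (simp add: seqs_def)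
  ultimately have "seqs l \<inter> (\<lambda>ub. (ladd a ub, ladd b ub)) -` {(u1, u2)}
                     = (if lsub b a = lsub u2 u1 then {lsub u1 a} else {})"
    by auto
  then show ?thesis
    unfolding unif_seq_def by (simp add: pmf_map measure_pmf_of_set card_seqs)
qed

lemma lsub_codeword:
  assumes f: "is_linear_map n l f" and \<sigma>n: "\<sigma>n permutes {..<n}" and \<sigma>l: "\<sigma>l permutes {..<l}"
    and v: "v \<in> seqs n" and v': "v' \<in> seqs n"
  shows "lsub (permute_list \<sigma>l (f (permute_list \<sigma>n v'))) (permute_list \<sigma>l (f (permute_list \<sigma>n v)))
           = permute_list \<sigma>l (f (permute_list \<sigma>n (lsub v' v)))"
proof -
  have pv: "permute_list \<sigma>n v \<in> seqs n" "permute_list \<sigma>n v' \<in> seqs n"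
    using v v' by (simp_all add: seqs_def)
  then have "f (permute_list \<sigma>n v) \<in> seqs l" "f (permute_list \<sigma>n v') \<in> seqs l"
    using f unfolding is_linear_map_def by blast+
  then have "lsub (permute_list \<sigma>l (f (permute_list \<sigma>n v'))) (permute_list \<sigma>l (f (permute_list \<sigma>n v)))
               = permute_list \<sigma>l (lsub (f (permute_list \<sigma>n v')) (f (permute_list \<sigma>n v)))"
    using \<sigma>l by (intro permute_list_lsub[symmetric]) (simp_all add: seqs_def)
  also have "lsub (f (permute_list \<sigma>n v')) (f (permute_list \<sigma>n v)) = f (lsub (permute_list \<sigma>n v') (permute_list \<sigma>n v))"
    using is_linear_map_lsub[OF f pv] ..
  also have "lsub (permute_list \<sigma>n v') (permute_list \<sigma>n v) = permute_list \<sigma>n (lsub v' v)"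
    using v v' \<sigma>n by (intro permute_list_lsub[symmetric]) (simp_all add: seqs_def)
  finally show ?thesis .
qed

text \<open>The difference of the two codewords loses the dither and, by linearity, is the permuted code
  word of \<open>v' - v\<close>; averaging over the permutations produces the multinomials in \<open>\<alpha>\<close>.\<close>

lemma pmf_codeword_pair:
  fixes F :: "('v::{finite,ab_group_add} list \<Rightarrow> 'u::{finite,ab_group_add} list) pmf"
  assumes F: "random_linear_code n l F"
    and v: "v \<in> seqs n" and v': "v' \<in> seqs n" and u1: "u1 \<in> seqs l" and u2: "u2 \<in> seqs l"
  shows "pmf (map_pmf (\<lambda>t. (codeword t v, codeword t v')) (encoder_seed n l F)) (u1, u2)
       = alpha n l F (type_of (lsub v' v)) (type_of (lsub u2 u1)) / real CARD('u) ^ l / real CARD('u) ^ l"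
proof -
  define w where "w = lsub v' v"
  define d where "d = lsub u2 u1"
  define K where "K = real CARD('u) ^ l"
  define count where
    "count = (\<lambda>f :: 'v list \<Rightarrow> 'u list. real (card {w'\<in>seqs n. type_of w' = type_of w \<and> type_of (f w') = type_of d}))"
  have w_in: "w \<in> seqs n" and d_in: "d \<in> seqs l"
    using v v' u1 u2 by (simp_all add: w_def d_def seqs_def)
  have pair: "pmf (map_pmf (\<lambda>ub. (ladd (permute_list \<sigma>l (f (permute_list \<sigma>n v))) ub,
                                  ladd (permute_list \<sigma>l (f (permute_list \<sigma>n v'))) ub)) (unif_seq l)) (u1, u2)
          = indicator {\<sigma>l. permute_list \<sigma>l (f (permute_list \<sigma>n w)) = d} \<sigma>l / K"
    if "f \<in> set_pmf F" "\<sigma>n permutes {..<n}" "\<sigma>l permutes {..<l}" for f \<sigma>n \<sigma>l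
  proof -
    have lin: "is_linear_map n l f"
      using F that(1) unfolding random_linear_code_def by blast
    then have "f (permute_list \<sigma>n x) \<in> seqs l" if "x \<in> seqs n" for x
      using that unfolding is_linear_map_def by (simp add: seqs_def)
    then show ?thesis
      using v v' u1 u2 lsub_codeword[OF lin that(2,3) v v']
      by (subst pmf_map_ladd_pair) (simp_all add: seqs_def w_def d_def K_def indicator_def)
  qed
  have "pmf (map_pmf (\<lambda>t. (codeword t v, codeword t v')) (encoder_seed n l F)) (u1, u2)
          = measure_pmf.expectation F (\<lambda>f. measure_pmf.expectation (unif_perm n) (\<lambda>\<sigma>n.
              measure_pmf.expectation (unif_perm l) (\<lambda>\<sigma>l.
                indicator {\<sigma>l. permute_list \<sigma>l (f (permute_list \<sigma>n w)) = d} \<sigma>l / K)))"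
    unfolding map_pmf_encoder_seed codeword_def pmf_bind
    by (intro expectation_cong_set_pmf) (simp add: pair)
  also have "\<dots> = measure_pmf.expectation F (\<lambda>f. measure_pmf.expectation (unif_perm n) (\<lambda>\<sigma>n.
              measure_pmf.prob (unif_perm l) {\<sigma>l. permute_list \<sigma>l (f (permute_list \<sigma>n w)) = d})) / K"
    by simp
  also have "\<dots> = measure_pmf.expectation F count / (multinom n (type_of w) * multinom l (type_of d)) / K"
    using w_in d_in random_linear_code_in_seqs[OF F]
    by (subst expectation_cong_set_pmf[where g="\<lambda>f. count f / (multinom n (type_of w) * multinom l (type_of d))"])
       (simp_all add: expectation_prob_permuted_image_eq count_def)
  also have "\<dots> = alpha n l F (type_of w) (type_of d) / K / K"
    using multinom_type_of_pos[of w n] multinom_type_of_pos[of d l] w_in d_in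
    by (simp add: alpha_def S_count_def count_def K_def seqs_def field_simps)
  finally show ?thesis
    unfolding w_def d_def K_def .
qed

lemma codeword_in_seqs:
  assumes "random_linear_code n l F" "v \<in> seqs n" "t \<in> set_pmf (encoder_seed n l F)"
  shows "codeword t v \<in> seqs l"
  using arg_cong[where f=set_pmf, OF map_pmf_codeword_eq_unif_seq[OF assms(1,2)]] assms(3) by auto

lemma expectation_codeword_pair:
  fixes h :: "'u::{finite,ab_group_add} list \<Rightarrow> 'u list \<Rightarrow> real"
    and F :: "('v::{finite,ab_group_add} list \<Rightarrow> 'u list) pmf"
  assumes F: "random_linear_code n l F" and v: "v \<in> seqs n" and v': "v' \<in> seqs n"
  shows "measure_pmf.expectation (encoder_seed n l F) (\<lambda>t. h (codeword t v) (codeword t v'))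
           = (\<Sum>u1\<in>seqs l. \<Sum>u2\<in>seqs l.
                alpha n l F (type_of (lsub v' v)) (type_of (lsub u2 u1)) / real CARD('u) ^ l / real CARD('u) ^ l
                * h u1 u2)"
proof -
  define P where "P = map_pmf (\<lambda>t. (codeword t v, codeword t v')) (encoder_seed n l F)"
  have "set_pmf P \<subseteq> seqs l \<times> seqs l"
    unfolding P_def using codeword_in_seqs[OF F v] codeword_in_seqs[OF F v'] by auto
  then have "measure_pmf.expectation P (\<lambda>(u1, u2). h u1 u2)
               = (\<Sum>(u1, u2)\<in>seqs l \<times> seqs l. pmf P (u1, u2) * h u1 u2)"
    by (subst expectation_finite_support) (auto simp: case_prod_unfold)
  also have "\<dots> = (\<Sum>u1\<in>seqs l. \<Sum>u2\<in>seqs l. pmf P (u1, u2) * h u1 u2)"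
    by (rule sum.cartesian_product[symmetric])
  finally show ?thesis
    unfolding P_def by (simp add: pmf_codeword_pair[OF F v v'])
qed

section \<open>Decoding by a test\<close>

lemma abs_sum_of_bool_le_card:
  assumes "finite A" "B \<subseteq> A"
  shows "\<bar>\<Sum>x\<in>B. of_bool (P x) :: real\<bar> \<le> real (card A)"
proof -
  have "B \<inter> {x. P x} \<subseteq> A"
    using assms(2) by blast
  moreover have "finite B"
    using assms finite_subset by blast
  ultimately show ?thesis
    using assms(1) by (simp add: card_mono)
qed

definition decode_by :: "nat \<Rightarrow> ('v list \<Rightarrow> 'y \<Rightarrow> bool) \<Rightarrow> 'y \<Rightarrow> 'v list" where
  "decode_by n G y =
     (if \<exists>v\<in>seqs n. G v y then SOME v. v \<in> seqs n \<and> G v y else replicate n undefined)"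

lemma decode_by_in_seqs: "decode_by n G y \<in> seqs n"
  unfolding decode_by_def by (auto simp: seqs_def intro: someI2_ex)

lemma decode_by_other:
  assumes "v \<in> seqs n" "G v y" "decode_by n G y \<noteq> v"
  shows "\<exists>v'\<in>seqs n - {v}. G v' y"
proof (rule ccontr)
  assume "\<not> ?thesis"
  then have "(SOME v'. v' \<in> seqs n \<and> G v' y) = v"
    using assms(1,2) by (intro some_equality) auto
  moreover have "decode_by n G y = (SOME v'. v' \<in> seqs n \<and> G v' y)"
    unfolding decode_by_def using assms(1,2) by auto
  ultimately show False
    using assms(3) by simp
qed

lemma decode_by_error_le:
  fixes v :: "'v::finite list"
  assumes "v \<in> seqs n"
  shows "of_bool (v \<noteq> decode_by n G y)
           \<le> of_bool (\<not> G v y) + (\<Sum>v'\<in>seqs n - {v}. of_bool (G v' y) :: real)"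
proof (cases "G v y \<and> decode_by n G y \<noteq> v")
  case True
  then have "(seqs n - {v}) \<inter> {v'. G v' y} \<noteq> {}"
    using decode_by_other[OF assms conjunct1[OF True] conjunct2[OF True]] by auto
  then have "0 < card ((seqs n - {v}) \<inter> {v'. G v' y})"
    by (simp add: card_gt_0_iff)
  then have "1 \<le> (\<Sum>v'\<in>seqs n - {v}. of_bool (G v' y) :: real)"
    by simp
  moreover have "v \<noteq> decode_by n G y"
    using True by auto
  ultimately show ?thesis
    by simp
next
  case False
  then have "of_bool (v \<noteq> decode_by n G y) \<le> (of_bool (\<not> G v y) :: real)"
    by auto
  moreover have "0 \<le> (\<Sum>v'\<in>seqs n - {v}. of_bool (G v' y) :: real)"
    by (rule sum_nonneg) simp
  ultimately show ?thesis
    by linarith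
qed

lemma opt_error_le_decode_by:
  "opt_error n PV Wm \<phi>
     \<le> measure_pmf.prob (do { v \<leftarrow> PV; y \<leftarrow> Wm (\<phi> v); return_pmf (v, y) })
         {(v, y). v \<noteq> decode_by n G y}"
  unfolding opt_error_def
  by (rule cINF_lower) (auto intro: bdd_belowI[where m=0] simp: decode_by_in_seqs)

lemma opt_error_nonneg: "0 \<le> opt_error n PV Wm \<phi>"
proof -
  have "(\<lambda>y. decode_by n (\<lambda>_ _. True) y) \<in> {\<psi>. \<forall>y. \<psi> y \<in> seqs n}"
    by (simp add: decode_by_in_seqs)
  then have "{\<psi>. \<forall>y. \<psi> y \<in> seqs n} \<noteq> {}"
    by auto
  then show ?thesis
    unfolding opt_error_def by (intro cINF_greatest) auto
qed

lemma opt_error_le_1: "opt_error n PV Wm \<phi> \<le> 1"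
  using opt_error_le_decode_by[of n PV Wm \<phi> "\<lambda>_ _. True"] measure_pmf.prob_le_1 by (rule order_trans)

lemma expectation_decode_by_error_le:
  fixes v :: "'v::finite list"
  assumes "v \<in> seqs n"
  shows "measure_pmf.expectation M (\<lambda>y. of_bool (v \<noteq> decode_by n G y))
           \<le> measure_pmf.expectation M (\<lambda>y. of_bool (\<not> G v y) + (\<Sum>v'\<in>seqs n - {v}. of_bool (G v' y)) :: real)"
proof (rule expectation_mono_bounded)
  show "\<bar>of_bool (v \<noteq> decode_by n G y) :: real\<bar> \<le> 1 + real (card (seqs n :: 'v list set))" for y
    by simp
  show "\<bar>of_bool (\<not> G v y) + (\<Sum>v'\<in>seqs n - {v}. of_bool (G v' y)) :: real\<bar>
          \<le> 1 + real (card (seqs n :: 'v list set))" for y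
    by (rule order_trans[OF abs_triangle_ineq add_mono]) (simp, rule abs_sum_of_bool_le_card, auto)
  show "of_bool (v \<noteq> decode_by n G y) \<le> of_bool (\<not> G v y) + (\<Sum>v'\<in>seqs n - {v}. of_bool (G v' y) :: real)"
    for y
    using assms by (rule decode_by_error_le)
qed

lemma opt_error_le_union_bound:
  fixes PV :: "'v::finite list pmf"
  assumes PV: "set_pmf PV \<subseteq> seqs n"
  shows "opt_error n PV Wm \<phi>
           \<le> measure_pmf.expectation PV (\<lambda>v. measure_pmf.expectation (Wm (\<phi> v)) (\<lambda>y. of_bool (\<not> G v y)))
             + measure_pmf.expectation PV (\<lambda>v. measure_pmf.expectation (Wm (\<phi> v))
                 (\<lambda>y. \<Sum>v'\<in>seqs n - {v}. of_bool (G v' y)))"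
proof -
  define C where "C = real (card (seqs n :: 'v list set))"
  define others where "others v y = (\<Sum>v'\<in>seqs n - {v}. of_bool (G v' y) :: real)" for v y
  have others: "\<bar>others v y\<bar> \<le> C" for v y
    unfolding others_def C_def by (rule abs_sum_of_bool_le_card) auto
  have "opt_error n PV Wm \<phi>
          \<le> measure_pmf.expectation PV (\<lambda>v. measure_pmf.expectation (Wm (\<phi> v))
               (\<lambda>y. of_bool (v \<noteq> decode_by n G y)))"
    using opt_error_le_decode_by[of n PV Wm \<phi> G] unfolding prob_bind_pmf_pair by (simp add: indicator_def)
  also have "\<dots> \<le> measure_pmf.expectation PV (\<lambda>v. measure_pmf.expectation (Wm (\<phi> v))
               (\<lambda>y. of_bool (\<not> G v y) + others v y))"
  proof (rule expectation_mono_bounded)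
    show "\<bar>measure_pmf.expectation (Wm (\<phi> v)) (\<lambda>y. of_bool (v \<noteq> decode_by n G y) :: real)\<bar> \<le> 1 + C" for v
      unfolding C_def by (intro abs_expectation_le) simp
    show "\<bar>measure_pmf.expectation (Wm (\<phi> v)) (\<lambda>y. of_bool (\<not> G v y) + others v y)\<bar> \<le> 1 + C" for v
      by (intro abs_expectation_le order_trans[OF abs_triangle_ineq add_mono]) (simp, rule others)
    show "measure_pmf.expectation (Wm (\<phi> v)) (\<lambda>y. of_bool (v \<noteq> decode_by n G y) :: real)
            \<le> measure_pmf.expectation (Wm (\<phi> v)) (\<lambda>y. of_bool (\<not> G v y) + others v y)"
      if "v \<in> set_pmf PV" for v
      unfolding others_def using that PV by (intro expectation_decode_by_error_le) auto
  qed
  also have "\<dots> = measure_pmf.expectation PV (\<lambda>v. measure_pmf.expectation (Wm (\<phi> v)) (\<lambda>y. of_bool (\<not> G v y))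
                                           + measure_pmf.expectation (Wm (\<phi> v)) (others v))"
    using others by (simp add: expectation_add_bounded[where A=1 and B=C])
  also have "\<dots> = measure_pmf.expectation PV (\<lambda>v. measure_pmf.expectation (Wm (\<phi> v)) (\<lambda>y. of_bool (\<not> G v y)))
                  + measure_pmf.expectation PV (\<lambda>v. measure_pmf.expectation (Wm (\<phi> v)) (others v))"
    using others by (intro expectation_add_bounded[where A=1 and B=C] abs_expectation_le) simp_all
  finally show ?thesis
    unfolding others_def .
qed

lemma not_density_le_imp_mult_le:
  fixes n b pv w py g :: real
  assumes pos: "n > 0" "b > 0" "pv > 0" "w > 0" "py > 0"
    and gt: "\<not> 1 / n * ln (w / py) \<le> 1 / n * ln (1 / pv) + 1 / n * ln b + g"
  shows "b * py \<le> pv * exp (- (n * g)) * w"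
proof -
  have "1 / n * (ln (1 / pv) + ln b + n * g) = 1 / n * ln (1 / pv) + 1 / n * ln b + g"
    using pos by (simp add: field_simps)
  then have "1 / n * (ln (1 / pv) + ln b + n * g) < 1 / n * ln (w / py)"
    using gt by simp
  then have "ln (1 / pv) + ln b + n * g < ln (w / py)"
    using pos by (simp add: divide_less_cancel)
  then have "ln (b * py * exp (n * g)) < ln (pv * w)"
    using pos by (simp add: ln_mult ln_div)
  then have "b * py * exp (n * g) < pv * w"
    using pos by simp
  then have "b * py * exp (n * g) * exp (- (n * g)) < pv * w * exp (- (n * g))"
    by simp
  then show ?thesis
    by (simp add: mult_ac flip: exp_add)
qed

lemma sum_mult_le_sum_fibre_bound:
  fixes a :: "'a \<Rightarrow> real" and b c :: "'b \<Rightarrow> real"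
  assumes "finite L" "\<And>x. c x \<ge> 0"
    and fibre: "\<And>x. x \<in> g ` L \<Longrightarrow> (\<Sum>u\<in>{u\<in>L. g u = x}. a u) \<le> real (card {u\<in>L. g u = x}) * b x"
  shows "(\<Sum>u\<in>L. a u * c (g u)) \<le> (\<Sum>u\<in>L. b (g u) * c (g u))"
proof -
  have "(\<Sum>u\<in>L. a u * c (g u)) = (\<Sum>x\<in>g ` L. (\<Sum>u\<in>{u\<in>L. g u = x}. a u) * c x)"
    using assms(1) by (subst sum.image_gen[of L _ g]) (auto simp: sum_distrib_right intro!: sum.cong)
  also have "\<dots> \<le> (\<Sum>x\<in>g ` L. real (card {u\<in>L. g u = x}) * b x * c x)"
    using fibre assms(2) by (intro sum_mono mult_right_mono) auto
  also have "\<dots> = (\<Sum>x\<in>g ` L. \<Sum>u\<in>{u\<in>L. g u = x}. b (g u) * c (g u))"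
  proof (rule sum.cong[OF refl])
    fix x
    have "(\<Sum>u\<in>{u\<in>L. g u = x}. b (g u) * c (g u)) = (\<Sum>u\<in>{u\<in>L. g u = x}. b x * c x)"
      by (rule sum.cong) auto
    then show "real (card {u\<in>L. g u = x}) * b x * c x = (\<Sum>u\<in>{u\<in>L. g u = x}. b (g u) * c (g u))"
      by simp
  qed
  also have "\<dots> = (\<Sum>u\<in>L. b (g u) * c (g u))"
    using assms(1) by (rule sum.image_gen[symmetric])
  finally show ?thesis .
qed

lemma limsup_le_if_eventually_le_plus_null:
  fixes a b c :: "nat \<Rightarrow> real"
  assumes "eventually (\<lambda>n. a n \<le> b n + c n) sequentially" "c \<longlonglongrightarrow> 0"
    and "limsup (\<lambda>n. ereal (b n)) \<le> e"
  shows "limsup (\<lambda>n. ereal (a n)) \<le> e"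
proof -
  have "limsup (\<lambda>n. ereal (c n)) = 0"
    using assms(2) by (simp add: lim_imp_Limsup tendsto_ereal zero_ereal_def)
  have "limsup (\<lambda>n. ereal (a n)) \<le> limsup (\<lambda>n. ereal (b n) + ereal (c n))"
    using assms(1) by (intro Limsup_mono) (auto elim: eventually_mono)
  also have "\<dots> \<le> limsup (\<lambda>n. ereal (b n)) + limsup (\<lambda>n. ereal (c n))"
    by (rule ereal_limsup_add_mono)
  also have "\<dots> \<le> e"
    using assms(3) \<open>limsup (\<lambda>n. ereal (c n)) = 0\<close> by simp
  finally show ?thesis .
qed

section \<open>The error bound for a fixed block length\<close>

locale linear_code_system =
  fixes n l :: nat and PV :: "'v::{finite,ab_group_add} list pmf" and W :: "'x list \<Rightarrow> 'y list pmf"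
    and F :: "('v list \<Rightarrow> 'u::{finite,ab_group_add} list) pmf" and q :: "'v list \<Rightarrow> 'u list \<Rightarrow> 'x list"
    and \<gamma> :: real
  assumes n_pos: "n > 0" and PV_supp: "set_pmf PV \<subseteq> seqs n" and F_lin: "random_linear_code n l F"
begin

abbreviation J :: "('v list \<times> 'x list \<times> 'y list) pmf" where
  "J \<equiv> joint PV l q W"

abbreviation PY :: "'y list pmf" where
  "PY \<equiv> map_pmf (\<lambda>(v, x, y). y) J"

definition low_density :: "('v list \<times> 'x list \<times> 'y list) set" where
  "low_density = {(v, x, y).
     1 / real n * ln (pmf (W x) y / pmf PY y)
       \<le> 1 / real n * ln (1 / pmf PV v) + 1 / real n * ln (beta' n l F q v x) + \<gamma>}"

text \<open>The positivity conditions hold on the support of \<open>J\<close>, so they do not enlarge the first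
  error term; they make the logarithms in \<open>low_density\<close> meaningful.\<close>

definition good :: "'v list \<Rightarrow> 'x list \<Rightarrow> 'y list \<Rightarrow> bool" where
  "good v x y \<longleftrightarrow> (v, x, y) \<notin> low_density \<and> pmf PV v > 0 \<and> pmf (W x) y > 0 \<and> pmf PY y > 0"

definition beta_plus :: "'v list \<Rightarrow> 'x list \<Rightarrow> real" where
  "beta_plus v x = max 0 (beta' n l F q v x)"

lemma expectation_joint:
  fixes f :: "'v list \<times> 'x list \<times> 'y list \<Rightarrow> real"
  assumes "\<And>z. \<bar>f z\<bar> \<le> B"
  shows "measure_pmf.expectation J f = measure_pmf.expectation PV (\<lambda>v. measure_pmf.expectation (unif_seq l)
           (\<lambda>u. measure_pmf.expectation (W (q v u)) (\<lambda>y. f (v, q v u, y))))"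
  using assms
  by (simp add: joint_def expectation_bind_pmf[where B=B] abs_expectation_le map_pmf_def[symmetric])

lemma prob_joint:
  "measure_pmf.prob J S = measure_pmf.expectation PV (\<lambda>v. measure_pmf.expectation (unif_seq l)
     (\<lambda>u. measure_pmf.expectation (W (q v u)) (\<lambda>y. indicator S (v, q v u, y) :: real)))"
  using expectation_joint[of "indicator S" 1] by simp

lemma expectation_output:
  fixes h :: "'y list \<Rightarrow> real"
  assumes "\<And>y. \<bar>h y\<bar> \<le> B"
  shows "measure_pmf.expectation PY h = measure_pmf.expectation PV (\<lambda>v. measure_pmf.expectation (unif_seq l)
           (\<lambda>u. measure_pmf.expectation (W (q v u)) h))"
  using assms expectation_joint[of "\<lambda>(v, x, y). h y" B] by (simp add: case_prod_unfold)

lemma in_set_pmf_output: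
  assumes "v \<in> set_pmf PV" "u \<in> seqs l" "y \<in> set_pmf (W (q v u))"
  shows "y \<in> set_pmf PY"
proof -
  have "(v, q v u, y) \<in> set_pmf J"
    using assms unfolding joint_def by auto
  then show ?thesis
    by force
qed

lemma not_good_le_indicator_low_density:
  assumes v: "v \<in> set_pmf PV" and u: "u \<in> seqs l" and y: "y \<in> set_pmf (W (q v u))"
  shows "of_bool (\<not> good v (q v u) y) \<le> (indicator low_density (v, q v u, y) :: real)"
proof -
  have "pmf PV v > 0" "pmf (W (q v u)) y > 0" "pmf PY y > 0"
    using v u y in_set_pmf_output[of v u y] by (simp_all add: pmf_positive)
  then show ?thesis
    by (auto simp: good_def indicator_def)
qed

lemma expectation_not_good_le_prob_low_density:
  "measure_pmf.expectation (encoder_seed n l F) (\<lambda>t. measure_pmf.expectation PV (\<lambda>v.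
     measure_pmf.expectation (W (q v (codeword t v))) (\<lambda>y. of_bool (\<not> good v (q v (codeword t v)) y))))
   \<le> measure_pmf.prob J low_density"
proof -
  define k where "k v u = measure_pmf.expectation (W (q v u)) (\<lambda>y. of_bool (\<not> good v (q v u) y) :: real)"
    for v u
  have k: "\<bar>k v u\<bar> \<le> 1" for v u
    unfolding k_def by (rule abs_expectation_le) simp
  have indicator: "\<bar>measure_pmf.expectation (W (q v u)) (\<lambda>y. indicator low_density (v, q v u, y) :: real)\<bar> \<le> 1"
    for v u
    by (intro abs_expectation_le) simp
  have "measure_pmf.expectation (encoder_seed n l F) (\<lambda>t. measure_pmf.expectation PV (\<lambda>v. k v (codeword t v)))
          = measure_pmf.expectation PV (\<lambda>v. measure_pmf.expectation (encoder_seed n l F) (\<lambda>t. k v (codeword t v)))"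
    using PV_supp k by (intro expectation_swap_finite_support) auto
  also have "\<dots> = measure_pmf.expectation PV (\<lambda>v. measure_pmf.expectation (unif_seq l) (k v))"
    using PV_supp F_lin by (intro expectation_cong_set_pmf expectation_codeword) auto
  also have "\<dots> \<le> measure_pmf.expectation PV (\<lambda>v. measure_pmf.expectation (unif_seq l)
                    (\<lambda>u. measure_pmf.expectation (W (q v u)) (\<lambda>y. indicator low_density (v, q v u, y))))"
  proof -
    have "k v u \<le> measure_pmf.expectation (W (q v u)) (\<lambda>y. indicator low_density (v, q v u, y))"
      if "v \<in> set_pmf PV" "u \<in> seqs l" for v u
      unfolding k_def
      by (rule expectation_mono_bounded[where B=1]) (simp, simp, rule not_good_le_indicator_low_density[OF that])
    then show ?thesis
      using k indicator by (intro expectation_mono_bounded[where B=1] abs_expectation_le) auto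
  qed
  also have "\<dots> = measure_pmf.prob J low_density"
    unfolding prob_joint ..
  finally show ?thesis
    unfolding k_def .
qed

lemma good_imp_beta_plus_le:
  assumes "good v x y"
  shows "beta_plus v x * pmf PY y \<le> pmf PV v * exp (- (real n * \<gamma>)) * pmf (W x) y"
proof (cases "beta' n l F q v x > 0")
  case True
  then show ?thesis
    using assms n_pos
    by (auto simp: good_def low_density_def beta_plus_def intro!: not_density_le_imp_mult_le)
qed (simp add: beta_plus_def)

lemma expectation_output_good_le:
  "measure_pmf.expectation PY (\<lambda>y. beta_plus v x * of_bool (good v x y))
     \<le> pmf PV v * exp (- (real n * \<gamma>))"
proof -
  have "measure_pmf.expectation PY (\<lambda>y. beta_plus v x * of_bool (good v x y))
          = measure_pmf.expectation PY (\<lambda>y. beta_plus v x * indicator {y. good v x y} y)"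
    by (simp add: indicator_def)
  also have "\<dots> = beta_plus v x * measure_pmf.prob PY {y. good v x y}"
    by simp
  also have "\<dots> \<le> (pmf PV v * exp (- (real n * \<gamma>))) * measure_pmf.prob (W x) {y. good v x y}"
    using good_imp_beta_plus_le by (intro scaled_prob_mono) (auto simp: beta_plus_def)
  also have "\<dots> \<le> pmf PV v * exp (- (real n * \<gamma>))"
    by (intro mult_left_le) simp_all
  finally show ?thesis .
qed

definition weighted_good :: "'v list \<Rightarrow> 'y list \<Rightarrow> real" where
  "weighted_good v' y =
     (\<Sum>u\<in>seqs l. beta_plus v' (q v' u) * of_bool (good v' (q v' u) y)) / real CARD('u) ^ l"

lemma beta_plus_nonneg: "beta_plus v x \<ge> 0"
  unfolding beta_plus_def by simp

lemma weighted_good_bounded: "\<bar>weighted_good v' y\<bar> \<le> (\<Sum>u\<in>seqs l. beta_plus v' (q v' u))"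
proof -
  have "0 \<le> weighted_good v' y"
    unfolding weighted_good_def by (intro divide_nonneg_pos sum_nonneg) (simp_all add: beta_plus_nonneg)
  moreover have "weighted_good v' y \<le> (\<Sum>u\<in>seqs l. beta_plus v' (q v' u)) / 1"
    unfolding weighted_good_def
    by (intro frac_le sum_mono sum_nonneg) (simp_all add: beta_plus_nonneg)
  ultimately show ?thesis
    by simp
qed

lemma fibre_average_le_beta':
  assumes v: "v \<in> seqs n" and v': "v' \<in> seqs n" and ne: "v \<noteq> v'" and u1: "u1 \<in> seqs l"
  shows "(\<Sum>u2\<in>q_inv l q v' x. alpha n l F (type_of (lsub v' v)) (type_of (lsub u2 u1))
           / real (card (q_inv l q v' x))) \<le> beta' n l F q v' x"
proof -
  have "length (lsub v' v) = n"
    using v v' by (simp add: seqs_def)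
  moreover have "lsub v' v \<noteq> replicate n 0"
    using v v' ne lsub_eq_replicate_0_iff[of v' v] by (auto simp: seqs_def)
  ultimately have "type_of (lsub v' v) \<in> types n - {type_of (replicate n 0)}"
    unfolding types_def by (auto simp: seqs_def type_of_eq_replicate_0_iff)
  then show ?thesis
    unfolding beta'_def using u1 by (intro Max_ge) (auto simp: types_def)
qed

lemma sum_alpha_good_le:
  assumes "v \<in> seqs n" "v' \<in> seqs n" "v \<noteq> v'" "u1 \<in> seqs l"
  shows "(\<Sum>u2\<in>seqs l. alpha n l F (type_of (lsub v' v)) (type_of (lsub u2 u1)) * of_bool (good v' (q v' u2) y))
           \<le> (\<Sum>u2\<in>seqs l. beta_plus v' (q v' u2) * of_bool (good v' (q v' u2) y))"
proof (rule sum_mult_le_sum_fibre_bound[where g="q v'" and c="\<lambda>x. of_bool (good v' x y)"])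
  fix x
  assume "x \<in> q v' ` seqs l"
  then have card: "card (q_inv l q v' x) > 0"
    unfolding q_inv_def by (auto simp: card_gt_0_iff)
  have "(\<Sum>u2\<in>q_inv l q v' x. alpha n l F (type_of (lsub v' v)) (type_of (lsub u2 u1)))
          / real (card (q_inv l q v' x)) \<le> beta_plus v' x"
    using fibre_average_le_beta'[OF assms, of x] unfolding beta_plus_def
    by (simp add: sum_divide_distrib)
  then show "(\<Sum>u2\<in>{u\<in>seqs l. q v' u = x}. alpha n l F (type_of (lsub v' v)) (type_of (lsub u2 u1)))
               \<le> real (card {u\<in>seqs l. q v' u = x}) * beta_plus v' x"
    using card unfolding q_inv_def by (simp add: divide_le_eq mult.commute)
qed simp_all

lemma expectation_alpha_good_le:
  assumes v: "v \<in> seqs n" and v': "v' \<in> seqs n" and ne: "v \<noteq> v'" and u1: "u1 \<in> seqs l"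
  shows "measure_pmf.expectation M (\<lambda>y.
           (\<Sum>u2\<in>seqs l. alpha n l F (type_of (lsub v' v)) (type_of (lsub u2 u1)) * of_bool (good v' (q v' u2) y))
             / real CARD('u) ^ l)
         \<le> measure_pmf.expectation M (weighted_good v')"
proof -
  define K where "K = real CARD('u) ^ l"
  define a where "a u2 = alpha n l F (type_of (lsub v' v)) (type_of (lsub u2 u1))" for u2
  define B where "B = (\<Sum>u2\<in>seqs l. \<bar>a u2\<bar>) / K + (\<Sum>u\<in>seqs l. beta_plus v' (q v' u))"
  have K: "K > 0"
    unfolding K_def by simp
  have "\<bar>(\<Sum>u2\<in>seqs l. a u2 * of_bool (good v' (q v' u2) y)) / K\<bar> \<le> B" for y
  proof -
    have "\<bar>\<Sum>u2\<in>seqs l. a u2 * of_bool (good v' (q v' u2) y)\<bar> \<le> (\<Sum>u2\<in>seqs l. \<bar>a u2\<bar>)"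
      by (rule order_trans[OF sum_abs sum_mono]) (simp add: abs_mult)
    then show ?thesis
      unfolding B_def using K by (simp add: divide_right_mono sum_nonneg beta_plus_nonneg add_increasing2)
  qed
  moreover have "\<bar>weighted_good v' y\<bar> \<le> B" for y
  proof -
    have "0 \<le> (\<Sum>u2\<in>seqs l. \<bar>a u2\<bar>) / K"
      using K by (simp add: sum_nonneg)
    then show ?thesis
      unfolding B_def using weighted_good_bounded[of v' y] by linarith
  qed
  moreover have "(\<Sum>u2\<in>seqs l. a u2 * of_bool (good v' (q v' u2) y)) / K \<le> weighted_good v' y" for y
    unfolding weighted_good_def K_def a_def
    using sum_alpha_good_le[OF v v' ne u1] by (simp add: divide_right_mono)
  ultimately show ?thesis
    unfolding a_def K_def by (intro expectation_mono_bounded)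
qed

lemma expectation_confusion_le:
  assumes v: "v \<in> seqs n" and v': "v' \<in> seqs n" and ne: "v \<noteq> v'"
  shows "measure_pmf.expectation (encoder_seed n l F) (\<lambda>t.
           measure_pmf.expectation (W (q v (codeword t v))) (\<lambda>y. of_bool (good v' (q v' (codeword t v')) y)))
       \<le> measure_pmf.expectation (unif_seq l) (\<lambda>u1. measure_pmf.expectation (W (q v u1)) (weighted_good v'))"
proof -
  define K where "K = real CARD('u) ^ l"
  define a where "a u1 u2 = alpha n l F (type_of (lsub v' v)) (type_of (lsub u2 u1))" for u1 u2
  have K: "K > 0"
    unfolding K_def by simp
  have "measure_pmf.expectation (encoder_seed n l F) (\<lambda>t.
           measure_pmf.expectation (W (q v (codeword t v))) (\<lambda>y. of_bool (good v' (q v' (codeword t v')) y)))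
        = (\<Sum>u1\<in>seqs l. 1 / K * (\<Sum>u2\<in>seqs l. a u1 u2 / K *
             measure_pmf.expectation (W (q v u1)) (\<lambda>y. of_bool (good v' (q v' u2) y))))"
    using expectation_codeword_pair[OF F_lin v v', where
        h="\<lambda>u1 u2. measure_pmf.expectation (W (q v u1)) (\<lambda>y. of_bool (good v' (q v' u2) y))"]
    unfolding a_def K_def by (simp add: sum_distrib_left)
  also have "\<dots> = (\<Sum>u1\<in>seqs l. 1 / K * measure_pmf.expectation (W (q v u1))
                    (\<lambda>y. (\<Sum>u2\<in>seqs l. a u1 u2 * of_bool (good v' (q v' u2) y)) / K))"
  proof (rule sum.cong[OF refl])
    fix u1
    have "measure_pmf.expectation (W (q v u1)) (\<lambda>y. \<Sum>u2\<in>seqs l. a u1 u2 * of_bool (good v' (q v' u2) y))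
            = (\<Sum>u2\<in>seqs l. measure_pmf.expectation (W (q v u1)) (\<lambda>y. a u1 u2 * of_bool (good v' (q v' u2) y)))"
      by (rule Bochner_Integration.integral_sum)
         (intro integrable_mult_right integrable_measure_pmf_bounded[where B=1], simp)
    then show "1 / K * (\<Sum>u2\<in>seqs l. a u1 u2 / K * measure_pmf.expectation (W (q v u1)) (\<lambda>y. of_bool (good v' (q v' u2) y)))
             = 1 / K * measure_pmf.expectation (W (q v u1))
                 (\<lambda>y. (\<Sum>u2\<in>seqs l. a u1 u2 * of_bool (good v' (q v' u2) y)) / K)"
      unfolding integral_divide_zero by (simp add: sum_divide_distrib)
  qed
  also have "\<dots> \<le> (\<Sum>u1\<in>seqs l. 1 / K * measure_pmf.expectation (W (q v u1)) (weighted_good v'))"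
    using K expectation_alpha_good_le[OF v v' ne] unfolding a_def K_def
    by (intro sum_mono mult_left_mono) simp_all
  also have "\<dots> = measure_pmf.expectation (unif_seq l) (\<lambda>u1. measure_pmf.expectation (W (q v u1)) (weighted_good v'))"
    unfolding unif_seq_def K_def by (simp add: integral_pmf_of_set card_seqs sum_divide_distrib)
  finally show ?thesis .
qed

lemma expectation_weighted_good_le:
  "measure_pmf.expectation PY (weighted_good v') \<le> pmf PV v' * exp (- (real n * \<gamma>))"
proof -
  define K where "K = real CARD('u) ^ l"
  have K: "K > 0" "real (card (seqs l :: 'u list set)) = K"
    unfolding K_def by (simp_all add: card_seqs)
  have bounded: "\<bar>beta_plus v' (q v' u) * of_bool (good v' (q v' u) y)\<bar> \<le> beta_plus v' (q v' u)" for u y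
    using beta_plus_nonneg by simp
  have "measure_pmf.expectation PY (weighted_good v')
          = (\<Sum>u\<in>seqs l. measure_pmf.expectation PY (\<lambda>y. beta_plus v' (q v' u) * of_bool (good v' (q v' u) y))) / K"
    unfolding weighted_good_def K_def integral_divide_zero
    by (rule arg_cong[where f="\<lambda>x. x / _"], rule Bochner_Integration.integral_sum)
       (rule integrable_measure_pmf_bounded[OF bounded])
  also have "\<dots> \<le> (\<Sum>u\<in>(seqs l :: 'u list set). pmf PV v' * exp (- (real n * \<gamma>))) / K"
  proof (intro divide_right_mono sum_mono)
    show "measure_pmf.expectation PY (\<lambda>y. beta_plus v' (q v' u) * of_bool (good v' (q v' u) y))
            \<le> pmf PV v' * exp (- (real n * \<gamma>))" for u
      by (rule expectation_output_good_le)
  qed (use K in simp)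
  also have "\<dots> = pmf PV v' * exp (- (real n * \<gamma>))"
    using K by simp
  finally show ?thesis .
qed

lemma sum_expectation_weighted_good_le:
  "(\<Sum>v'\<in>seqs n. measure_pmf.expectation PY (weighted_good v')) \<le> exp (- (real n * \<gamma>))"
proof -
  have "(\<Sum>v'\<in>seqs n. measure_pmf.expectation PY (weighted_good v'))
          \<le> (\<Sum>v'\<in>seqs n. pmf PV v' * exp (- (real n * \<gamma>)))"
    by (intro sum_mono expectation_weighted_good_le)
  also have "\<dots> = exp (- (real n * \<gamma>))"
    using sum_pmf_eq_1[OF finite_seqs PV_supp] by (simp flip: sum_distrib_right)
  finally show ?thesis .
qed

lemma expectation_confusions_eq:
  "measure_pmf.expectation (encoder_seed n l F) (\<lambda>t. measure_pmf.expectation (W (q v (codeword t v)))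
      (\<lambda>y. \<Sum>v'\<in>seqs n - {v}. of_bool (good v' (q v' (codeword t v')) y) :: real))
   = (\<Sum>v'\<in>seqs n - {v}. measure_pmf.expectation (encoder_seed n l F) (\<lambda>t.
        measure_pmf.expectation (W (q v (codeword t v))) (\<lambda>y. of_bool (good v' (q v' (codeword t v')) y))))"
proof -
  have "measure_pmf.expectation (W (q v (codeword t v)))
          (\<lambda>y. \<Sum>v'\<in>seqs n - {v}. of_bool (good v' (q v' (codeword t v')) y) :: real)
        = (\<Sum>v'\<in>seqs n - {v}. measure_pmf.expectation (W (q v (codeword t v)))
             (\<lambda>y. of_bool (good v' (q v' (codeword t v')) y)))" for t
    by (rule Bochner_Integration.integral_sum) (rule integrable_measure_pmf_bounded[where B=1], simp)
  then show ?thesis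
    by (simp only:) (rule Bochner_Integration.integral_sum,
        rule integrable_measure_pmf_bounded[where B=1], rule abs_expectation_le, simp)
qed

lemma expectation_confusions_le:
  "measure_pmf.expectation (encoder_seed n l F) (\<lambda>t. measure_pmf.expectation PV (\<lambda>v.
     measure_pmf.expectation (W (q v (codeword t v)))
       (\<lambda>y. \<Sum>v'\<in>seqs n - {v}. of_bool (good v' (q v' (codeword t v')) y) :: real)))
   \<le> exp (- (real n * \<gamma>))"
proof -
  define Q where "Q v v' = measure_pmf.expectation (unif_seq l)
                             (\<lambda>u1. measure_pmf.expectation (W (q v u1)) (weighted_good v'))" for v v' :: "'v list"
  have Q: "Q v v' \<ge> 0" for v v'
    unfolding Q_def weighted_good_def
    by (intro Bochner_Integration.integral_nonneg divide_nonneg_pos sum_nonneg)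
       (simp_all add: beta_plus_nonneg)
  have "measure_pmf.expectation (encoder_seed n l F) (\<lambda>t. measure_pmf.expectation PV (\<lambda>v.
          measure_pmf.expectation (W (q v (codeword t v)))
            (\<lambda>y. \<Sum>v'\<in>seqs n - {v}. of_bool (good v' (q v' (codeword t v')) y) :: real)))
        = (\<Sum>v\<in>seqs n. pmf PV v * (\<Sum>v'\<in>seqs n - {v}. measure_pmf.expectation (encoder_seed n l F) (\<lambda>t.
             measure_pmf.expectation (W (q v (codeword t v))) (\<lambda>y. of_bool (good v' (q v' (codeword t v')) y)))))"
    unfolding expectation_confusions_eq[symmetric] expectation_finite_support[OF finite_seqs PV_supp, symmetric]
    using PV_supp
    by (intro expectation_swap_finite_support[where B="real (card (seqs n :: 'v list set))"] abs_expectation_le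
        abs_sum_of_bool_le_card) auto
  also have "\<dots> \<le> (\<Sum>v\<in>seqs n. pmf PV v * (\<Sum>v'\<in>seqs n. Q v v'))"
  proof (intro sum_mono mult_left_mono)
    fix v :: "'v list"
    assume v: "v \<in> seqs n"
    have "(\<Sum>v'\<in>seqs n - {v}. measure_pmf.expectation (encoder_seed n l F) (\<lambda>t.
             measure_pmf.expectation (W (q v (codeword t v))) (\<lambda>y. of_bool (good v' (q v' (codeword t v')) y))))
            \<le> (\<Sum>v'\<in>seqs n - {v}. Q v v')"
      unfolding Q_def using v by (intro sum_mono expectation_confusion_le) auto
    also have "\<dots> \<le> (\<Sum>v'\<in>seqs n. Q v v')"
      using Q by (intro sum_mono2) auto
    finally show "(\<Sum>v'\<in>seqs n - {v}. measure_pmf.expectation (encoder_seed n l F) (\<lambda>t.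
             measure_pmf.expectation (W (q v (codeword t v))) (\<lambda>y. of_bool (good v' (q v' (codeword t v')) y))))
            \<le> (\<Sum>v'\<in>seqs n. Q v v')" .
  qed simp
  also have "\<dots> = (\<Sum>v'\<in>seqs n. measure_pmf.expectation PY (weighted_good v'))"
    unfolding sum_distrib_left
  proof (subst sum.swap, rule sum.cong[OF refl])
    fix v'
    show "(\<Sum>v\<in>seqs n. pmf PV v * Q v v') = measure_pmf.expectation PY (weighted_good v')"
      unfolding expectation_output[OF weighted_good_bounded] Q_def
        expectation_finite_support[OF finite_seqs PV_supp] ..
  qed
  also have "\<dots> \<le> exp (- (real n * \<gamma>))"
    by (rule sum_expectation_weighted_good_le)
  finally show ?thesis .
qed

theorem avg_error_le:
  "avg_error n l PV W F q \<le> measure_pmf.prob J low_density + exp (- (real n * \<gamma>))"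
proof -
  define C where "C = real (card (seqs n :: 'v list set))"
  define missed where "missed t = measure_pmf.expectation PV (\<lambda>v.
    measure_pmf.expectation (W (q v (codeword t v))) (\<lambda>y. of_bool (\<not> good v (q v (codeword t v)) y) :: real))" for t
  define confused where "confused t = measure_pmf.expectation PV (\<lambda>v.
    measure_pmf.expectation (W (q v (codeword t v)))
      (\<lambda>y. \<Sum>v'\<in>seqs n - {v}. of_bool (good v' (q v' (codeword t v')) y) :: real))" for t
  have missed: "\<bar>missed t\<bar> \<le> 1" for t
    unfolding missed_def by (intro abs_expectation_le) simp
  have confused: "\<bar>confused t\<bar> \<le> C" for t
    unfolding confused_def C_def by (intro abs_expectation_le abs_sum_of_bool_le_card) auto
  have "avg_error n l PV W F q
          = measure_pmf.expectation (encoder_seed n l F) (\<lambda>t. opt_error n PV W (\<lambda>v. q v (codeword t v)))"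
    unfolding avg_error_def random_encoder_eq_map_encoder_seed by simp
  also have "\<dots> \<le> measure_pmf.expectation (encoder_seed n l F) (\<lambda>t. missed t + confused t)"
  proof (rule expectation_mono_bounded)
    show "\<bar>opt_error n PV W (\<lambda>v. q v (codeword t v))\<bar> \<le> 1 + C" for t
      using opt_error_nonneg[of n PV W "\<lambda>v. q v (codeword t v)"] opt_error_le_1[of n PV W "\<lambda>v. q v (codeword t v)"]
      unfolding C_def by (simp add: abs_le_iff)
    show "\<bar>missed t + confused t\<bar> \<le> 1 + C" for t
      using missed[of t] confused[of t] by linarith
    show "opt_error n PV W (\<lambda>v. q v (codeword t v)) \<le> missed t + confused t" for t
      unfolding missed_def confused_def
      using opt_error_le_union_bound[OF PV_supp, where G="\<lambda>v y. good v (q v (codeword t v)) y"] by simp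
  qed
  also have "\<dots> = measure_pmf.expectation (encoder_seed n l F) missed
                  + measure_pmf.expectation (encoder_seed n l F) confused"
    using missed confused by (rule expectation_add_bounded)
  also have "\<dots> \<le> measure_pmf.prob J low_density + exp (- (real n * \<gamma>))"
    unfolding missed_def confused_def
    by (intro add_mono expectation_not_good_le_prob_low_density expectation_confusions_le)
  finally show ?thesis .
qed

end

theorem theorem1:
  fixes V :: "nat \<Rightarrow> ('v::{finite,ab_group_add}) list pmf"
    and W :: "nat \<Rightarrow> 'x list \<Rightarrow> 'y list pmf"
    and F :: "nat \<Rightarrow> ('v list \<Rightarrow> ('u::{finite,ab_group_add}) list) pmf"
    and q :: "nat \<Rightarrow> 'v list \<Rightarrow> 'u list \<Rightarrow> 'x list"
    and m l :: "nat \<Rightarrow> nat"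
    and \<gamma> :: "nat \<Rightarrow> real"
    and R \<epsilon> :: real
  assumes source: "\<And>n. n \<ge> 1 \<Longrightarrow> set_pmf (V n) \<subseteq> seqs n"
    and channel: "\<And>k x. x \<in> seqs k \<Longrightarrow> set_pmf (W k x) \<subseteq> seqs k"
    and R_nonneg: "R \<ge> 0" and eps_nonneg: "\<epsilon> \<ge> 0"
    and m_pos: "\<And>n. n \<ge> 1 \<Longrightarrow> m n > 0"
    and l_pos: "\<And>n. n \<ge> 1 \<Longrightarrow> l n > 0"
    and F_lin: "\<And>n. n \<ge> 1 \<Longrightarrow> random_linear_code n (l n) (F n)"
    and q_maps: "\<And>n v u. n \<ge> 1 \<Longrightarrow> v \<in> seqs n \<Longrightarrow> u \<in> seqs (l n) \<Longrightarrow> q n v u \<in> seqs (m n)"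
    and gamma_pos: "\<And>n. n \<ge> 1 \<Longrightarrow> \<gamma> n > 0"
    and gamma_lim: "\<gamma> \<longlonglongrightarrow> 0"
    and n_gamma: "filterlim (\<lambda>n. real n * \<gamma> n) at_top sequentially"
    and rate: "limsup (\<lambda>n. ereal (real n / real (m n))) \<le> ereal R"
    and cond: "limsup (\<lambda>n. ereal (measure_pmf.prob (joint (V n) (l n) (q n) (W (m n)))
                 {(v, x, y).
                    1 / real n * ln (pmf (W (m n) x) y /
                        pmf (map_pmf (\<lambda>(v, x, y). y) (joint (V n) (l n) (q n) (W (m n)))) y)
                    \<le> 1 / real n * ln (1 / pmf (V n) v)
                      + 1 / real n * ln (beta' n (l n) (F n) (q n) v x) + \<gamma> n}))
             \<le> ereal \<epsilon>"
  shows "limsup (\<lambda>n. ereal (avg_error n (l n) (V n) (W (m n)) (F n) (q n))) \<le> ereal \<epsilon>"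
proof -
  define b where "b n = measure_pmf.prob (joint (V n) (l n) (q n) (W (m n)))
                 {(v, x, y).
                    1 / real n * ln (pmf (W (m n) x) y /
                        pmf (map_pmf (\<lambda>(v, x, y). y) (joint (V n) (l n) (q n) (W (m n)))) y)
                    \<le> 1 / real n * ln (1 / pmf (V n) v)
                      + 1 / real n * ln (beta' n (l n) (F n) (q n) v x) + \<gamma> n}" for n
  have "avg_error n (l n) (V n) (W (m n)) (F n) (q n) \<le> b n + exp (- (real n * \<gamma> n))"
    if "n \<ge> 1" for n
  proof -
    interpret linear_code_system n "l n" "V n" "W (m n)" "F n" "q n" "\<gamma> n"
      using that source F_lin by unfold_locales auto
    show ?thesis
      using avg_error_le unfolding low_density_def b_def .
  qed
  then have "eventually (\<lambda>n. avg_error n (l n) (V n) (W (m n)) (F n) (q n) \<le> b n + exp (- (real n * \<gamma> n)))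
               sequentially"
    by (intro eventually_sequentiallyI)
  moreover have "(\<lambda>n. exp (- (real n * \<gamma> n))) \<longlonglongrightarrow> 0"
    using filterlim_compose[OF exp_at_bot filterlim_compose[OF filterlim_uminus_at_bot_at_top n_gamma]]
    by (simp add: o_def)
  ultimately show ?thesis
    using cond[folded b_def] by (rule limsup_le_if_eventually_le_plus_null)
qed

end
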